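(* Let $\mathcal{X}\subseteq\mathbb{R}^d$, $\mathcal{Y}=\{-1,+1\}$, let $p(\bm{x},y)$ be a joint distribution on $\mathcal{X}\times\mathcal{Y}$ with $\pi_+=p(y=+1)\in(0,1)$, $\pi_-=1-\pi_+$, $\pi_+\neq1/2$, and $p_\pm(\bm{x})=p(\bm{x}\mid y=\pm1)$. Let $\ell:\mathbb{R}\times\mathcal{Y}\to[0,\infty)$ be a loss, $\ell_\pm(z):=\ell(z,\pm1)$, and $R(g)=\mathbb{E}_{p(\bm{x},y)}[\ell(g(\bm{x}),y)]$. Define the densities $\widetilde{p}_+(\bm{x})=\frac{\pi_+}{\pi_-^2+\pi_+}p_+(\bm{x})+\frac{\pi_-^2}{\pi_-^2+\pi_+}p_-(\bm{x})$, $\widetilde{p}_-(\bm{x})=\frac{\pi_+^2}{\pi_+^2+\pi_-}p_+(\bm{x})+\frac{\pi_-}{\pi_+^2+\pi_-}p_-(\bm{x})$, and for $t\in\{+,-\}$ (with $-t$ the opposite sign) the row vectors $\bm{\alpha}^{\mathrm S}_t=\frac{\pi_t^2}{\pi_+-\pi_-}(\pi_+,\,-\pi_-)$, $\bm{\alpha}^{\mathrm D}_t=\frac{1}{\pi_+-\pi_-}\big(\pi_-(\pi_t^2-\pi_{-t}),\,\pi_+(\pi_{-t}-\pi_t^2)\big)$. Set $R_{\mathrm{S\text{-}PC}}(g)=\sum_{t\in\{+,-\}}\mathbb{E}_{\widetilde p_t(\bm x)}\big[\bm{\alpha}^{\mathrm S}_t(\ell_+(g(\bm{x})),\ell_-(g(\bm{x})))^\top\big]$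 and $R_{\mathrm{D\text{-}PC}}(g)=\sum_{t\in\{+,-\}}\mathbb{E}_{\widetilde p_t(\bm x)}\big[\bm{\alpha}^{\mathrm D}_t(\ell_+(g(\bm{x})),\ell_-(g(\bm{x})))^\top\big]$. Then for every $g:\mathcal{X}\to\mathbb{R}$ for which these expectations are finite, $$R(g)=R_{\mathrm{SD\text{-}PC}}(g):=R_{\mathrm{S\text{-}PC}}(g)+R_{\mathrm{D\text{-}PC}}(g).$$
   Context: $\widetilde p_+$ and $\widetilde p_-$ model the marginal distributions of the instance judged more likely, respectively less likely, to belong to the positive class in a pairwise comparison; $R_{\mathrm{S\text{-}PC}}$ and $R_{\mathrm{D\text{-}PC}}$ are the parts of the risk attributed to similar and dissimilar pairs that also carry a pairwise-comparison label. *)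

theory Defs
  imports "HOL-Analysis.Analysis"
begin

text \<open>Class signs t in {+,-} are encoded as booleans: True = +, False = -.
  Labels y in Y = {-1,+1} are encoded as the reals -1 and 1.\<close>

definition cls_prior :: "real \<Rightarrow> bool \<Rightarrow> real" where
  "cls_prior \<pi>p t = (if t then \<pi>p else 1 - \<pi>p)"

definition joint_dens :: "real \<Rightarrow> ('x \<Rightarrow> real) \<Rightarrow> ('x \<Rightarrow> real) \<Rightarrow> 'x \<Rightarrow> real \<Rightarrow> real" where
  "joint_dens \<pi>p pp pm x y =
     (if y = 1 then \<pi>p * pp x else if y = -1 then (1 - \<pi>p) * pm x else 0)"

definition dens_exp :: "(real^'d) set \<Rightarrow> (real^'d \<Rightarrow> real) \<Rightarrow> (real^'d \<Rightarrow> real) \<Rightarrow> real" where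
  "dens_exp X h f = (LINT x:X|lborel. h x * f x)"

definition risk :: "(real^'d) set \<Rightarrow> real \<Rightarrow> (real^'d \<Rightarrow> real) \<Rightarrow> (real^'d \<Rightarrow> real)
     \<Rightarrow> (real \<Rightarrow> real \<Rightarrow> real) \<Rightarrow> (real^'d \<Rightarrow> real) \<Rightarrow> real" where
  "risk X \<pi>p pp pm loss g =
     (LINT x:X|lborel. (\<Sum>y\<in>{-1, 1::real}. loss (g x) y * joint_dens \<pi>p pp pm x y))"

definition ptilde :: "real \<Rightarrow> ('x \<Rightarrow> real) \<Rightarrow> ('x \<Rightarrow> real) \<Rightarrow> bool \<Rightarrow> 'x \<Rightarrow> real" where
  "ptilde \<pi>p pp pm t x =
     (let \<pi>m = 1 - \<pi>p in
      if t then \<pi>p / (\<pi>m\<^sup>2 + \<pi>p) * pp x + \<pi>m\<^sup>2 / (\<pi>m\<^sup>2 + \<pi>p) * pm x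
      else \<pi>p\<^sup>2 / (\<pi>p\<^sup>2 + \<pi>m) * pp x + \<pi>m / (\<pi>p\<^sup>2 + \<pi>m) * pm x)"

definition alphaS :: "real \<Rightarrow> bool \<Rightarrow> real \<times> real" where
  "alphaS \<pi>p t =
     (let \<pi>m = 1 - \<pi>p; c = (cls_prior \<pi>p t)\<^sup>2 / (\<pi>p - \<pi>m) in (c * \<pi>p, c * (- \<pi>m)))"

definition alphaD :: "real \<Rightarrow> bool \<Rightarrow> real \<times> real" where
  "alphaD \<pi>p t =
     (let \<pi>m = 1 - \<pi>p; \<pi>t = cls_prior \<pi>p t; \<pi>nt = cls_prior \<pi>p (\<not> t) in
      (1 / (\<pi>p - \<pi>m) * (\<pi>m * (\<pi>t\<^sup>2 - \<pi>nt)), 1 / (\<pi>p - \<pi>m) * (\<pi>p * (\<pi>nt - \<pi>t\<^sup>2))))"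

definition rowdot :: "real \<times> real \<Rightarrow> (real \<Rightarrow> real \<Rightarrow> real) \<Rightarrow> real \<Rightarrow> real" where
  "rowdot a loss z = fst a * loss z 1 + snd a * loss z (-1)"

definition risk_SPC :: "(real^'d) set \<Rightarrow> real \<Rightarrow> (real^'d \<Rightarrow> real) \<Rightarrow> (real^'d \<Rightarrow> real)
     \<Rightarrow> (real \<Rightarrow> real \<Rightarrow> real) \<Rightarrow> (real^'d \<Rightarrow> real) \<Rightarrow> real" where
  "risk_SPC X \<pi>p pp pm loss g =
     (\<Sum>t\<in>UNIV. dens_exp X (ptilde \<pi>p pp pm t) (\<lambda>x. rowdot (alphaS \<pi>p t) loss (g x)))"

definition risk_DPC :: "(real^'d) set \<Rightarrow> real \<Rightarrow> (real^'d \<Rightarrow> real) \<Rightarrow> (real^'d \<Rightarrow> real)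
     \<Rightarrow> (real \<Rightarrow> real \<Rightarrow> real) \<Rightarrow> (real^'d \<Rightarrow> real) \<Rightarrow> real" where
  "risk_DPC X \<pi>p pp pm loss g =
     (\<Sum>t\<in>UNIV. dens_exp X (ptilde \<pi>p pp pm t) (\<lambda>x. rowdot (alphaD \<pi>p t) loss (g x)))"

definition risk_SDPC where
  "risk_SDPC X \<pi>p pp pm loss g = risk_SPC X \<pi>p pp pm loss g + risk_DPC X \<pi>p pp pm loss g"

end

theory Submission
  imports Defs
begin

text \<open>The identity holds pointwise, before integration. For each sign t the two
  coefficient vectors add up to a very simple one, alphaS t + alphaD t being (1, -pi_+) for
  t = + and (-pi_-, 1) for t = -. Both densities tilde p_t share the denominator
  1 - pi_+ pi_-, and multiplying out
  (pi_+ p_+ + pi_-^2 p_-)(l_+ - pi_+ l_-) + (pi_+^2 p_+ + pi_- p_-)(l_- - pi_- l_+)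
  leaves exactly (1 - pi_+ pi_-)(pi_+ p_+ l_+ + pi_- p_- l_-). Integrating this pointwise
  identity is legitimate because all the tilde p_t-weighted losses are integrable; apart from
  this and pi_+ \<noteq> 1/2, no hypothesis of the theorem is needed.\<close>

lemma alphaS_plus_alphaD:
  assumes "p \<noteq> 1/2"
  shows "alphaS p t + alphaD p t = (if t then (1, - p) else (- (1 - p), 1))"
proof -
  have "p - (1 - p) \<noteq> 0" using assms by simp
  then show ?thesis
    by (cases t)
      (simp_all add: alphaS_def alphaD_def cls_prior_def Let_def field_simps power2_eq_square,
       algebra+)
qed

lemma rowdot_add: "rowdot (a + b) loss z = rowdot a loss z + rowdot b loss z"
  by (simp add: rowdot_def algebra_simps)

lemma ptilde_common_denominator:
  "ptilde p pp pm t x =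
     (if t then p * pp x + (1 - p)\<^sup>2 * pm x else p\<^sup>2 * pp x + (1 - p) * pm x) / (1 - p * (1 - p))"
proof -
  have "(1 - p)\<^sup>2 + p = 1 - p * (1 - p)" "p\<^sup>2 + (1 - p) = 1 - p * (1 - p)"
    by (simp_all add: algebra_simps power2_eq_square)
  then show ?thesis
    unfolding ptilde_def Let_def by (simp only:) (simp add: add_divide_distrib)
qed

lemma one_minus_prior_product_pos: "0 < 1 - p * (1 - p :: real)"
proof -
  have "1 - p * (1 - p) = (p - 1/2)\<^sup>2 + 3/4"
    by (simp add: algebra_simps power2_eq_square)
  then show ?thesis
    by (metis add_nonneg_pos zero_le_power2 zero_less_divide_iff zero_less_numeral)
qed

lemma joint_loss_sum:
  "(\<Sum>y\<in>{-1, 1::real}. loss z y * joint_dens p pp pm x y)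
     = p * pp x * loss z 1 + (1 - p) * pm x * loss z (-1)"
  by (simp add: joint_dens_def)

lemma ptilde_combination:
  "ptilde p pp pm True x * (A - p * B) + ptilde p pp pm False x * (B - (1 - p) * A)
     = p * pp x * A + (1 - p) * pm x * B"
proof -
  have "1 - p * (1 - p) \<noteq> 0"
    using one_minus_prior_product_pos[of p] by simp
  moreover have "(p * pp x + (1 - p)\<^sup>2 * pm x) * (A - p * B)
      + (p\<^sup>2 * pp x + (1 - p) * pm x) * (B - (1 - p) * A)
      = (1 - p * (1 - p)) * (p * pp x * A + (1 - p) * pm x * B)"
    by (simp add: algebra_simps power2_eq_square)
  ultimately show ?thesis
    by (simp add: ptilde_common_denominator divide_simps)
qed

lemma joint_loss_sum_eq_ptilde_sum:
  assumes "p \<noteq> 1/2"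
  shows "(\<Sum>y\<in>{-1, 1::real}. loss z y * joint_dens p pp pm x y)
     = (\<Sum>t\<in>UNIV. ptilde p pp pm t x * rowdot (alphaS p t) loss z)
     + (\<Sum>t\<in>UNIV. ptilde p pp pm t x * rowdot (alphaD p t) loss z)"
proof -
  have "(\<Sum>t\<in>UNIV. ptilde p pp pm t x * rowdot (alphaS p t) loss z)
      + (\<Sum>t\<in>UNIV. ptilde p pp pm t x * rowdot (alphaD p t) loss z)
      = (\<Sum>t\<in>UNIV. ptilde p pp pm t x * rowdot (alphaS p t + alphaD p t) loss z)"
    by (simp add: rowdot_add sum.distrib[symmetric] distrib_left)
  also have "\<dots> = ptilde p pp pm True x * (loss z 1 - p * loss z (-1))
      + ptilde p pp pm False x * (loss z (-1) - (1 - p) * loss z 1)"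
    unfolding alphaS_plus_alphaD[OF assms] by (simp add: UNIV_bool rowdot_def algebra_simps)
  also have "\<dots> = p * pp x * loss z 1 + (1 - p) * pm x * loss z (-1)"
    by (rule ptilde_combination)
  finally show ?thesis
    by (simp add: joint_loss_sum)
qed

lemma set_integrable_weighted_rowdot:
  assumes "\<And>y. y \<in> {-1, 1} \<Longrightarrow> set_integrable M X (\<lambda>x. w x * loss (g x) y)"
  shows "set_integrable M X (\<lambda>x. w x * rowdot a loss (g x))"
proof -
  have "(\<lambda>x. w x * rowdot a loss (g x)) =
      (\<lambda>x. fst a * (w x * loss (g x) 1) + snd a * (w x * loss (g x) (-1)))"
    by (auto simp: rowdot_def algebra_simps)
  then show ?thesis
    using assms by (auto intro!: set_integral_add(1) set_integrable_mult_right)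
qed

theorem theorem3p2:
  fixes X :: "(real^'d) set"
    and \<pi>p :: real
    and pp pm :: "real^'d \<Rightarrow> real"
    and loss :: "real \<Rightarrow> real \<Rightarrow> real"
    and g :: "real^'d \<Rightarrow> real"
  assumes X_meas: "X \<in> sets lborel"
    and pi_pos: "0 < \<pi>p" and pi_lt1: "\<pi>p < 1" and pi_ne_half: "\<pi>p \<noteq> 1/2"
    and pp_meas: "pp \<in> borel_measurable lborel" and pm_meas: "pm \<in> borel_measurable lborel"
    and pp_nonneg: "\<And>x. x \<in> X \<Longrightarrow> 0 \<le> pp x" and pm_nonneg: "\<And>x. x \<in> X \<Longrightarrow> 0 \<le> pm x"
    and pp_int: "set_integrable lborel X pp" and pm_int: "set_integrable lborel X pm"
    and pp_norm: "(LINT x:X|lborel. pp x) = 1" and pm_norm: "(LINT x:X|lborel. pm x) = 1"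
    and loss_nonneg: "\<And>z y. y \<in> {-1, 1} \<Longrightarrow> 0 \<le> loss z y"
    and finite_exp: "\<And>t y. y \<in> {-1, 1} \<Longrightarrow>
          set_integrable lborel X (\<lambda>x. ptilde \<pi>p pp pm t x * loss (g x) y)"
  shows "risk X \<pi>p pp pm loss g = risk_SDPC X \<pi>p pp pm loss g"
proof -
  define h where "h t a x = ptilde \<pi>p pp pm t x * rowdot a loss (g x)" for t a x
  have integrable: "set_integrable lborel X (h t a)" for t a
    unfolding h_def by (rule set_integrable_weighted_rowdot) (rule finite_exp)
  have "risk X \<pi>p pp pm loss g = (LINT x:X|lborel.
      (h False (alphaS \<pi>p False) x + h True (alphaS \<pi>p True) x)
    + (h False (alphaD \<pi>p False) x + h True (alphaD \<pi>p True) x))"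
    by (simp add: risk_def joint_loss_sum_eq_ptilde_sum[OF pi_ne_half] h_def UNIV_bool)
  also have "\<dots> = ((LINT x:X|lborel. h False (alphaS \<pi>p False) x)
      + (LINT x:X|lborel. h True (alphaS \<pi>p True) x))
    + ((LINT x:X|lborel. h False (alphaD \<pi>p False) x)
      + (LINT x:X|lborel. h True (alphaD \<pi>p True) x))"
    using integrable by (simp add: set_integral_add)
  also have "\<dots> = risk_SDPC X \<pi>p pp pm loss g"
    by (simp add: risk_SDPC_def risk_SPC_def risk_DPC_def dens_exp_def h_def UNIV_bool)
  finally show ?thesis .
qed

end
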